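(* Let $g$ be a $C^1$ function near $0\in\mathbb{C}$ with $g(0)=0$, $g_z(0)=0$, $g_{\bar z}(0)=1$, such that $z^2$ and $g^2$ separate points near $0$. Let $f$ be an odd holomorphic function of one complex variable near $0$ with $f(z)=O(z^3)$. Then for every closed disk $D$ centered at $0$ with sufficiently small radius, $$[\,z^2,\ (g+f)^2\,;\,D\,]=[\,z^2,\ g^2\,;\,D\,].$$
   Context: For continuous functions $f_1,f_2$ on a compact set $D\subset\mathbb{C}$, $[f_1,f_2;D]$ denotes the uniform closure in $C(D)$ of the set of polynomials (with complex coefficients) in $f_1$ and $f_2$. *)

theory Defs
  imports "HOL-Analysis.Analysis"
begin

definition poly_in2 :: "(complex \<Rightarrow> complex) \<Rightarrow> (complex \<Rightarrow> complex) \<Rightarrow> (complex \<Rightarrow> complex) set" where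
  "poly_in2 f1 f2 = {(\<lambda>z. \<Sum>(i,j)\<in>S. c (i,j) * f1 z ^ i * f2 z ^ j) | S c. finite (S :: (nat \<times> nat) set)}"

definition unif_closure_alg :: "(complex \<Rightarrow> complex) \<Rightarrow> (complex \<Rightarrow> complex) \<Rightarrow> complex set \<Rightarrow> (complex \<Rightarrow> complex) set" where
  "unif_closure_alg f1 f2 D = {h \<in> extensional D. continuous_on D h \<and>
      (\<forall>e>0. \<exists>p\<in>poly_in2 f1 f2. \<forall>z\<in>D. cmod (h z - p z) < e)}"

definition wirt_z :: "(complex \<Rightarrow> complex) \<Rightarrow> complex" where
  "wirt_z Dg = (Dg 1 - \<i> * Dg \<i>) / 2"
definition wirt_zbar :: "(complex \<Rightarrow> complex) \<Rightarrow> complex" where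
  "wirt_zbar Dg = (Dg 1 + \<i> * Dg \<i>) / 2"

end

theory Submission
  imports Defs "HOL-Complex_Analysis.Complex_Analysis"
begin

(*
  Near 0 the function g is close to the conjugation z -> cnj z, and so is g + f because
  f = O(z^3). Hence on a small disc D both z g(z) and z (g(z) + f(z)) lie in the sector
  |Im w| <= Re w, whose squares lie in the right half-plane. There the principal square root is a
  uniform limit of polynomials, so z g = sqrt (z^2 g^2) belongs to [z^2, g^2; D]. The odd
  holomorphic f is uniformly approximated on D by z E(z^2) with E a polynomial (odd parts of its
  Taylor polynomials), so (g + f)^2 is the uniform limit of g^2 + 2 (z g) E(z^2) + z^2 E(z^2)^2
  and belongs to [z^2, g^2; D]. The same argument for g + f and -f gives the reverse inclusion.
*)

lemma poly_in2_sum_monomials: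
  assumes "finite I"
  shows "(\<lambda>z. \<Sum>x\<in>I. d x * f1 z ^ i x * f2 z ^ j x) \<in> poly_in2 f1 f2"
proof -
  define S where "S = (\<lambda>x. (i x, j x)) ` I"
  define c where "c = (\<lambda>(a, b). \<Sum>x\<in>{x \<in> I. (i x, j x) = (a, b)}. d x)"
  have "(\<Sum>(a, b)\<in>S. c (a, b) * f1 z ^ a * f2 z ^ b) = (\<Sum>x\<in>I. d x * f1 z ^ i x * f2 z ^ j x)"
    for z
  proof -
    have "(\<Sum>(a, b)\<in>S. c (a, b) * f1 z ^ a * f2 z ^ b)
        = (\<Sum>y\<in>S. \<Sum>x\<in>{x \<in> I. (i x, j x) = y}. d x * f1 z ^ i x * f2 z ^ j x)"
      by (auto simp: c_def sum_distrib_right intro!: sum.cong)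
    also have "\<dots> = (\<Sum>x\<in>I. d x * f1 z ^ i x * f2 z ^ j x)"
      using assms by (intro sum.group) (auto simp: S_def)
    finally show ?thesis .
  qed
  moreover have "finite S"
    using assms by (simp add: S_def)
  ultimately show ?thesis
    unfolding poly_in2_def by (intro CollectI exI[of _ S] exI[of _ c]) auto
qed

lemma poly_in2E:
  assumes "p \<in> poly_in2 f1 f2"
  obtains S c where "finite (S :: (nat \<times> nat) set)"
    and "p = (\<lambda>z. \<Sum>x\<in>S. c x * f1 z ^ fst x * f2 z ^ snd x)"
  using assms unfolding poly_in2_def by (auto simp: case_prod_beta)

lemma poly_in2_add:
  assumes "p \<in> poly_in2 f1 f2" "q \<in> poly_in2 f1 f2"
  shows "(\<lambda>z. p z + q z) \<in> poly_in2 f1 f2"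
proof -
  obtain S c where S: "finite S" "p = (\<lambda>z. \<Sum>x\<in>S. c x * f1 z ^ fst x * f2 z ^ snd x)"
    using assms(1) by (rule poly_in2E)
  obtain T d where T: "finite T" "q = (\<lambda>z. \<Sum>x\<in>T. d x * f1 z ^ fst x * f2 z ^ snd x)"
    using assms(2) by (rule poly_in2E)
  have "(\<lambda>z. \<Sum>x\<in>S <+> T. case_sum c d x * f1 z ^ case_sum fst fst x * f2 z ^ case_sum snd snd x)
      \<in> poly_in2 f1 f2"
    using S T by (intro poly_in2_sum_monomials) auto
  also have "(\<lambda>z. \<Sum>x\<in>S <+> T. case_sum c d x * f1 z ^ case_sum fst fst x * f2 z ^ case_sum snd snd x)
      = (\<lambda>z. p z + q z)"
    using S T by (simp add: sum.Plus o_def)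
  finally show ?thesis .
qed

lemma poly_in2_mult:
  assumes "p \<in> poly_in2 f1 f2" "q \<in> poly_in2 f1 f2"
  shows "(\<lambda>z. p z * q z) \<in> poly_in2 f1 f2"
proof -
  obtain S c where S: "finite S" "p = (\<lambda>z. \<Sum>x\<in>S. c x * f1 z ^ fst x * f2 z ^ snd x)"
    using assms(1) by (rule poly_in2E)
  obtain T d where T: "finite T" "q = (\<lambda>z. \<Sum>x\<in>T. d x * f1 z ^ fst x * f2 z ^ snd x)"
    using assms(2) by (rule poly_in2E)
  have "(\<lambda>z. \<Sum>(x, y)\<in>S \<times> T. c x * d y * f1 z ^ (fst x + fst y) * f2 z ^ (snd x + snd y))
      \<in> poly_in2 f1 f2"
    using S T poly_in2_sum_monomials[of "S \<times> T" "\<lambda>(x, y). c x * d y"] by (simp add: case_prod_beta)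
  also have "(\<lambda>z. \<Sum>(x, y)\<in>S \<times> T. c x * d y * f1 z ^ (fst x + fst y) * f2 z ^ (snd x + snd y))
      = (\<lambda>z. p z * q z)"
    by (auto simp: S T sum_product sum.cartesian_product power_add mult_ac intro!: sum.cong)
  finally show ?thesis .
qed

lemma poly_in2_const: "(\<lambda>z. c) \<in> poly_in2 f1 f2"
  using poly_in2_sum_monomials[of "{()}" "\<lambda>_. c" f1 "\<lambda>_. 0" f2 "\<lambda>_. 0"] by simp

lemma poly_in2_first: "f1 \<in> poly_in2 f1 f2"
  using poly_in2_sum_monomials[of "{()}" "\<lambda>_. 1" f1 "\<lambda>_. 1" f2 "\<lambda>_. 0"] by simp

lemma poly_in2_second: "f2 \<in> poly_in2 f1 f2"
  using poly_in2_sum_monomials[of "{()}" "\<lambda>_. 1" f1 "\<lambda>_. 0" f2 "\<lambda>_. 1"] by simp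

lemma poly_in2_power:
  assumes "p \<in> poly_in2 f1 f2"
  shows "(\<lambda>z. p z ^ n) \<in> poly_in2 f1 f2"
  by (induction n) (use assms poly_in2_const[of 1] poly_in2_mult in auto)

lemma poly_in2_sum:
  assumes "finite S" "\<And>x. x \<in> S \<Longrightarrow> h x \<in> poly_in2 f1 f2"
  shows "(\<lambda>z. \<Sum>x\<in>S. h x z) \<in> poly_in2 f1 f2"
  using assms
  by (induction S rule: finite_induct) (use poly_in2_const[of 0] poly_in2_add in auto)

lemma continuous_on_poly_in2:
  assumes "p \<in> poly_in2 f1 f2" "continuous_on D f1" "continuous_on D f2"
  shows "continuous_on D p"
  using assms(1) by (rule poly_in2E) (use assms(2,3) in \<open>auto intro!: continuous_intros\<close>)

section \<open>Uniform approximation by polynomials in two functions\<close>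

definition uniformly_approximable ::
    "(complex \<Rightarrow> complex) \<Rightarrow> (complex \<Rightarrow> complex) \<Rightarrow> complex set \<Rightarrow> (complex \<Rightarrow> complex) set" where
  "uniformly_approximable f1 f2 D =
     {h. \<forall>e>0. \<exists>p\<in>poly_in2 f1 f2. \<forall>z\<in>D. cmod (h z - p z) < e}"

lemma unif_closure_alg_eq:
  "unif_closure_alg f1 f2 D =
     {h \<in> extensional D. continuous_on D h \<and> h \<in> uniformly_approximable f1 f2 D}"
  unfolding unif_closure_alg_def uniformly_approximable_def by blast

lemma uniformly_approximableD:
  assumes "h \<in> uniformly_approximable f1 f2 D" "e > 0"
  obtains p where "p \<in> poly_in2 f1 f2" "\<And>z. z \<in> D \<Longrightarrow> cmod (h z - p z) < e"
  using assms unfolding uniformly_approximable_def by blast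

lemma poly_in2_uniformly_approximable:
  "p \<in> poly_in2 f1 f2 \<Longrightarrow> p \<in> uniformly_approximable f1 f2 D"
  unfolding uniformly_approximable_def by force

lemma uniformly_approximable_const: "(\<lambda>z. c) \<in> uniformly_approximable f1 f2 D"
  by (rule poly_in2_uniformly_approximable[OF poly_in2_const])

lemma uniformly_approximable_uniform_limit:
  assumes "\<And>e. e > 0 \<Longrightarrow> \<exists>k\<in>uniformly_approximable f1 f2 D. \<forall>z\<in>D. cmod (h z - k z) < e"
  shows "h \<in> uniformly_approximable f1 f2 D"
  unfolding uniformly_approximable_def
proof (intro CollectI allI impI)
  fix e :: real
  assume "e > 0"
  then obtain k where k: "k \<in> uniformly_approximable f1 f2 D" "\<forall>z\<in>D. cmod (h z - k z) < e / 2"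
    using assms[of "e / 2"] by auto
  obtain p where p: "p \<in> poly_in2 f1 f2" "\<And>z. z \<in> D \<Longrightarrow> cmod (k z - p z) < e / 2"
    using uniformly_approximableD[OF k(1) half_gt_zero[OF \<open>e > 0\<close>]] by blast
  have "cmod (h z - p z) < e" if "z \<in> D" for z
    using norm_diff_triangle_less[of "h z" "k z" "e / 2" "p z" "e / 2"] k(2) p(2) that by simp
  with p(1) show "\<exists>p\<in>poly_in2 f1 f2. \<forall>z\<in>D. cmod (h z - p z) < e"
    by blast
qed

lemma uniformly_approximable_add:
  assumes "a \<in> uniformly_approximable f1 f2 D" "b \<in> uniformly_approximable f1 f2 D"
  shows "(\<lambda>z. a z + b z) \<in> uniformly_approximable f1 f2 D"
  unfolding uniformly_approximable_def
proof (intro CollectI allI impI)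
  fix e :: real
  assume "e > 0"
  obtain p where p: "p \<in> poly_in2 f1 f2" "\<And>z. z \<in> D \<Longrightarrow> cmod (a z - p z) < e / 2"
    using uniformly_approximableD[OF assms(1) half_gt_zero[OF \<open>e > 0\<close>]] by blast
  obtain q where q: "q \<in> poly_in2 f1 f2" "\<And>z. z \<in> D \<Longrightarrow> cmod (b z - q z) < e / 2"
    using uniformly_approximableD[OF assms(2) half_gt_zero[OF \<open>e > 0\<close>]] by blast
  have "cmod (a z + b z - (p z + q z)) < e" if "z \<in> D" for z
    using norm_diff_triangle_ineq[of "a z" "b z" "p z" "q z"] p(2)[OF that] q(2)[OF that]
    by linarith
  with poly_in2_add[OF p(1) q(1)]
  show "\<exists>r\<in>poly_in2 f1 f2. \<forall>z\<in>D. cmod (a z + b z - r z) < e"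
    by (intro bexI[of _ "\<lambda>z. p z + q z"]) auto
qed

lemma uniformly_approximable_bounded:
  assumes "h \<in> uniformly_approximable f1 f2 D"
    and "continuous_on D f1" "continuous_on D f2" "compact D"
  obtains B where "\<And>z. z \<in> D \<Longrightarrow> cmod (h z) \<le> B"
proof -
  obtain p where p: "p \<in> poly_in2 f1 f2" "\<And>z. z \<in> D \<Longrightarrow> cmod (h z - p z) < 1"
    using uniformly_approximableD[OF assms(1) zero_less_one] by blast
  obtain B where B: "\<And>z. z \<in> D \<Longrightarrow> cmod (p z) \<le> B"
    using continuous_on_compact_bound[OF assms(4) continuous_on_poly_in2[OF p(1) assms(2,3)]]
    by blast
  have "cmod (h z) \<le> B + 1" if "z \<in> D" for z
    using norm_triangle_ineq[of "h z - p z" "p z"] p(2)[OF that] B[OF that] by simp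
  then show ?thesis
    using that by blast
qed

lemma norm_mult_diff_le:
  fixes a b p q :: "'a :: real_normed_algebra"
  shows "norm (a * b - p * q) \<le> norm a * norm (b - q) + norm (a - p) * norm q"
proof -
  have "a * b - p * q = a * (b - q) + (a - p) * q"
    by (simp add: algebra_simps)
  then show ?thesis
    by (metis norm_triangle_le norm_mult_ineq add_mono)
qed

lemma uniformly_approximable_mult:
  assumes a: "a \<in> uniformly_approximable f1 f2 D" and b: "b \<in> uniformly_approximable f1 f2 D"
    and D: "continuous_on D f1" "continuous_on D f2" "compact D"
  shows "(\<lambda>z. a z * b z) \<in> uniformly_approximable f1 f2 D"
  unfolding uniformly_approximable_def
proof (intro CollectI allI impI)
  fix e :: real
  assume "e > 0"
  obtain A where A: "\<And>z. z \<in> D \<Longrightarrow> cmod (a z) \<le> A"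
    using uniformly_approximable_bounded[OF a D] by blast
  obtain B where B: "\<And>z. z \<in> D \<Longrightarrow> cmod (b z) \<le> B"
    using uniformly_approximable_bounded[OF b D] by blast
  define M where "M = \<bar>A\<bar> + \<bar>B\<bar> + 1"
  define \<delta> where "\<delta> = min 1 (e / (2 * M))"
  have "M > 0"
    by (simp add: M_def add_nonneg_pos)
  then have "\<delta> > 0" "\<delta> \<le> 1" "\<delta> * M < e"
    using \<open>e > 0\<close> by (auto simp: \<delta>_def min_def field_simps)
  obtain p where p: "p \<in> poly_in2 f1 f2" "\<And>z. z \<in> D \<Longrightarrow> cmod (a z - p z) < \<delta>"
    using uniformly_approximableD[OF a \<open>\<delta> > 0\<close>] by blast
  obtain q where q: "q \<in> poly_in2 f1 f2" "\<And>z. z \<in> D \<Longrightarrow> cmod (b z - q z) < \<delta>"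
    using uniformly_approximableD[OF b \<open>\<delta> > 0\<close>] by blast
  have "cmod (a z * b z - p z * q z) < e" if z: "z \<in> D" for z
  proof -
    have "cmod (q z) \<le> \<bar>B\<bar> + 1"
      using norm_triangle_ineq4[of "b z" "b z - q z"] B[OF z] q(2)[OF z] \<open>\<delta> \<le> 1\<close> by auto
    moreover have "cmod (a z) * cmod (b z - q z) \<le> \<bar>A\<bar> * \<delta>"
      using A[OF z] q(2)[OF z] by (intro mult_mono) auto
    ultimately have "cmod (a z) * cmod (b z - q z) + cmod (a z - p z) * cmod (q z) \<le> \<delta> * M"
      using p(2)[OF z] \<open>\<delta> > 0\<close> mult_mono[of "cmod (a z - p z)" \<delta> "cmod (q z)" "\<bar>B\<bar> + 1"]
      by (simp add: M_def algebra_simps)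
    then show ?thesis
      using norm_mult_diff_le[of "a z" "b z" "p z" "q z"] \<open>\<delta> * M < e\<close> by linarith
  qed
  with poly_in2_mult[OF p(1) q(1)]
  show "\<exists>r\<in>poly_in2 f1 f2. \<forall>z\<in>D. cmod (a z * b z - r z) < e"
    by (intro bexI[of _ "\<lambda>z. p z * q z"]) auto
qed

lemma uniformly_approximable_power:
  assumes "a \<in> uniformly_approximable f1 f2 D"
    and "continuous_on D f1" "continuous_on D f2" "compact D"
  shows "(\<lambda>z. a z ^ n) \<in> uniformly_approximable f1 f2 D"
  by (induction n)
    (use assms uniformly_approximable_const[of 1] uniformly_approximable_mult in auto)

lemma uniformly_approximable_sum:
  assumes "finite S" "\<And>x. x \<in> S \<Longrightarrow> h x \<in> uniformly_approximable f1 f2 D"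
  shows "(\<lambda>z. \<Sum>x\<in>S. h x z) \<in> uniformly_approximable f1 f2 D"
  using assms
  by (induction S rule: finite_induct)
    (use uniformly_approximable_const[of 0] uniformly_approximable_add in auto)

lemma uniformly_approximable_subset:
  assumes f2': "f2' \<in> uniformly_approximable f1 f2 D"
    and D: "continuous_on D f1" "continuous_on D f2" "compact D"
  shows "uniformly_approximable f1 f2' D \<subseteq> uniformly_approximable f1 f2 D"
proof
  have poly: "p \<in> uniformly_approximable f1 f2 D" if p: "p \<in> poly_in2 f1 f2'" for p
  proof -
    obtain S c where S: "finite S" "p = (\<lambda>z. \<Sum>x\<in>S. c x * f1 z ^ fst x * f2' z ^ snd x)"
      using p by (rule poly_in2E)
    show ?thesis
      unfolding S(2) using poly_in2_uniformly_approximable[OF poly_in2_first] f2' D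
      by (intro uniformly_approximable_sum[OF S(1)] uniformly_approximable_mult
          uniformly_approximable_const uniformly_approximable_power)
  qed
  fix h
  assume "h \<in> uniformly_approximable f1 f2' D"
  then show "h \<in> uniformly_approximable f1 f2 D"
    using poly by (intro uniformly_approximable_uniform_limit) (meson uniformly_approximableD)
qed

section \<open>Square roots and odd holomorphic functions\<close>

lemma holomorphic_uniform_Taylor_approx:
  fixes F :: "complex \<Rightarrow> complex"
  assumes hol: "F holomorphic_on ball c R" and r: "0 \<le> r" "r < R" and "e > 0"
  shows "\<exists>a n. \<forall>w\<in>cball c r. cmod (F w - (\<Sum>i<n. a i * (w - c) ^ i)) < e"
proof -
  define a where "a i = (deriv ^^ i) F c / fact i" for i
  have sums: "(\<lambda>i. a i * (w - c) ^ i) sums F w" if "w \<in> ball c R" for w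
    unfolding a_def using holomorphic_power_series[OF hol that] .
  define r' where "r' = (r + R) / 2"
  have "r < r'" "r' < R"
    using r by (auto simp: r'_def)
  have "c + of_real r' \<in> ball c R"
    using \<open>r < r'\<close> \<open>r' < R\<close> r by (simp add: dist_norm)
  from sums[OF this] have "summable (\<lambda>i. a i * of_real r' ^ i)"
    by (simp add: sums_iff)
  then have "ereal r' \<le> conv_radius a"
    using conv_radius_geI[of a "of_real r'"] \<open>r < r'\<close> \<open>0 \<le> r\<close> by simp
  moreover have "ereal r < ereal r'"
    using \<open>r < r'\<close> by simp
  ultimately have "ereal r < conv_radius a"
    by (rule order.strict_trans2[rotated])
  then have "uniform_limit (cball c r) (\<lambda>n w. \<Sum>i<n. a i * (w - c) ^ i)
      (\<lambda>w. \<Sum>i. a i * (w - c) ^ i) sequentially"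
    by (rule powser_uniform_limit)
  from uniform_limitD[OF this \<open>e > 0\<close>] obtain n
    where n: "\<forall>w\<in>cball c r. dist (\<Sum>i<n. a i * (w - c) ^ i) (\<Sum>i. a i * (w - c) ^ i) < e"
    by (auto simp: eventually_sequentially)
  have "(\<Sum>i. a i * (w - c) ^ i) = F w" if "w \<in> cball c r" for w
    using sums_unique[OF sums, of w] that r by auto
  with n show ?thesis
    by (auto simp: dist_norm norm_minus_commute)
qed

lemma norm_csqrt_add_of_real_diff_le:
  assumes "0 \<le> Re w" "0 < d"
  shows "cmod (csqrt (w + of_real d) - csqrt w) \<le> sqrt d"
proof -
  define a where "a = csqrt (w + of_real d)"
  define b where "b = csqrt w"
  have "Re (a ^ 2) = Re w + d"
    by (simp add: a_def)
  then have "Re a ^ 2 = Re w + d + Im a ^ 2"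
    by (simp add: power2_eq_square)
  then have "d \<le> Re a ^ 2"
    using assms(1) zero_le_power2[of "Im a"] by linarith
  moreover have "0 \<le> Re a"
    unfolding a_def by (rule Re_csqrt)
  ultimately have "sqrt d \<le> Re a"
    using real_sqrt_le_mono by fastforce
  moreover have "0 \<le> Re b"
    unfolding b_def by (rule Re_csqrt)
  ultimately have "sqrt d \<le> cmod (a + b)"
    using complex_Re_le_cmod[of "a + b"] by simp
  moreover have "cmod (a - b) * cmod (a + b) = d"
  proof -
    have "(a - b) * (a + b) = of_real d"
      by (simp add: a_def b_def algebra_simps flip: power2_eq_square)
    then show ?thesis
      using assms(2) by (metis norm_mult norm_of_real abs_of_pos)
  qed
  ultimately have "cmod (a - b) * sqrt d \<le> d"
    by (metis mult_left_mono norm_ge_zero)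
  then have "cmod (a - b) \<le> d / sqrt d"
    using assms(2) by (simp add: field_simps)
  then show ?thesis
    using assms(2) by (simp add: a_def b_def real_div_sqrt)
qed

lemma csqrt_add_of_real_uniform_poly_approx:
  assumes "0 < d" "e > 0"
  shows "\<exists>a n c. \<forall>w. 0 \<le> Re w \<and> cmod w \<le> R \<longrightarrow>
           cmod (csqrt (w + of_real d) - (\<Sum>i<n. a i * (w - c) ^ i)) < e"
proof -
  \<comment> \<open>The disc of radius \<open>c + d / 2\<close> about \<open>c\<close> lies in \<open>Re w > -d / 2\<close>, away from the branch
    cut of \<open>csqrt (w + d)\<close>, and the concentric disc of radius \<open>c + d / 4\<close> contains the half-disc
    \<open>Re w \<ge> 0, |w| \<le> R\<close>.\<close>
  define c where "c = 2 * R\<^sup>2 / d + 1"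
  have "c > 0" "R\<^sup>2 \<le> c * d / 2"
    using \<open>0 < d\<close> by (auto simp: c_def field_simps add_pos_nonneg)
  have "(\<lambda>w. csqrt (w + of_real d)) field_differentiable at w"
    if "w \<in> ball (of_real c) (c + d / 2)" for w
  proof -
    have "Re w > - d / 2"
      using that complex_Re_le_cmod[of "of_real c - w"] by (simp add: dist_norm)
    then have "csqrt field_differentiable at (w + of_real d)"
      using \<open>0 < d\<close> by (intro field_differentiable_at_csqrt) (auto simp: complex_nonpos_Reals_iff)
    moreover have "(\<lambda>w. w + of_real d) field_differentiable at w"
      by (intro derivative_intros)
    ultimately show ?thesis
      using field_differentiable_compose by (auto simp: o_def)
  qed
  then have "(\<lambda>w. csqrt (w + of_real d)) holomorphic_on ball (of_real c) (c + d / 2)"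
    using field_differentiable_at_within holomorphic_on_def by blast
  then obtain a n where an: "\<forall>w\<in>cball (of_real c) (c + d / 4).
      cmod (csqrt (w + of_real d) - (\<Sum>i<n. a i * (w - of_real c) ^ i)) < e"
    using holomorphic_uniform_Taylor_approx[of _ _ _ "c + d / 4"] \<open>c > 0\<close> \<open>0 < d\<close> \<open>e > 0\<close> by force
  have disc: "w \<in> cball (of_real c) (c + d / 4)" if "0 \<le> Re w" "cmod w \<le> R" for w
  proof -
    have "(dist (of_real c) w)\<^sup>2 = (cmod w)\<^sup>2 - 2 * c * Re w + c\<^sup>2"
      by (simp add: dist_norm cmod_power2 power2_diff)
    also have "\<dots> \<le> R\<^sup>2 + c\<^sup>2"
      using that \<open>c > 0\<close> by (smt (verit) mult_nonneg_nonneg norm_ge_zero power_mono)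
    also have "\<dots> \<le> (c + d / 4)\<^sup>2"
      using \<open>R\<^sup>2 \<le> c * d / 2\<close> by (simp add: power2_sum) (use zero_le_power2[of "d / 4"] in linarith)
    finally have "(dist (of_real c) w)\<^sup>2 \<le> (c + d / 4)\<^sup>2" .
    then show ?thesis
      unfolding mem_cball by (rule power2_le_imp_le) (use \<open>c > 0\<close> \<open>0 < d\<close> in simp)
  qed
  show ?thesis
    using an disc by blast
qed

lemma csqrt_uniform_poly_approx_half_plane:
  assumes "e > 0"
  shows "\<exists>a n c. \<forall>w. 0 \<le> Re w \<and> cmod w \<le> R \<longrightarrow>
           cmod (csqrt w - (\<Sum>i<n. a i * (w - c) ^ i)) < e"
proof -
  \<comment> \<open>\<open>csqrt\<close> is not holomorphic at 0, so approximate the shifted root instead.\<close>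
  define d where "d = (e / 2)\<^sup>2"
  have "0 < d" "sqrt d = e / 2"
    using \<open>e > 0\<close> by (auto simp: d_def)
  obtain a n c where an: "\<forall>w. 0 \<le> Re w \<and> cmod w \<le> R \<longrightarrow>
      cmod (csqrt (w + of_real d) - (\<Sum>i<n. a i * (w - c) ^ i)) < e / 2"
    using csqrt_add_of_real_uniform_poly_approx[OF \<open>0 < d\<close>, of "e / 2" R] \<open>e > 0\<close> by auto
  have "cmod (csqrt w - (\<Sum>i<n. a i * (w - c) ^ i)) < e" if "0 \<le> Re w" "cmod w \<le> R" for w
  proof -
    have "cmod (csqrt w - csqrt (w + of_real d)) \<le> e / 2"
      using norm_csqrt_add_of_real_diff_le[OF that(1) \<open>0 < d\<close>] \<open>sqrt d = e / 2\<close>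
      by (simp add: norm_minus_commute)
    moreover have "cmod (csqrt (w + of_real d) - (\<Sum>i<n. a i * (w - c) ^ i)) < e / 2"
      using an that by blast
    ultimately show ?thesis
      using norm_triangle_ineq[of "csqrt w - csqrt (w + of_real d)"
          "csqrt (w + of_real d) - (\<Sum>i<n. a i * (w - c) ^ i)"] by simp
  qed
  then show ?thesis
    by blast
qed

definition right_sector :: "complex set" where
  "right_sector = {w. \<bar>Im w\<bar> \<le> Re w}"

lemma csqrt_power2_right_sector: "w \<in> right_sector \<Longrightarrow> csqrt (w\<^sup>2) = w"
  unfolding right_sector_def by (intro csqrt_square) auto

lemma Re_power2_right_sector_nonneg: "w \<in> right_sector \<Longrightarrow> 0 \<le> Re (w\<^sup>2)"
  unfolding right_sector_def using mult_mono[of "\<bar>Im w\<bar>" "Re w" "\<bar>Im w\<bar>" "Re w"]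
  by (simp add: power2_eq_square)

lemma right_sector_root_uniformly_approximable:
  assumes sector: "\<And>z. z \<in> D \<Longrightarrow> K z \<in> right_sector"
    and root: "\<And>z. z \<in> D \<Longrightarrow> (K z)\<^sup>2 = f1 z * f2 z"
    and bound: "\<And>z. z \<in> D \<Longrightarrow> cmod (K z) \<le> B"
  shows "K \<in> uniformly_approximable f1 f2 D"
  unfolding uniformly_approximable_def
proof (intro CollectI allI impI)
  fix e :: real
  assume "e > 0"
  then obtain a n c where an: "\<forall>w. 0 \<le> Re w \<and> cmod w \<le> B\<^sup>2 \<longrightarrow>
      cmod (csqrt w - (\<Sum>i<n. a i * (w - c) ^ i)) < e"
    using csqrt_uniform_poly_approx_half_plane by blast
  define p where "p z = (\<Sum>i<n. a i * (f1 z * f2 z - c) ^ i)" for z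
  have "(\<lambda>z. f1 z * f2 z - c) \<in> poly_in2 f1 f2"
    using poly_in2_add[OF poly_in2_mult[OF poly_in2_first poly_in2_second] poly_in2_const[of "- c"]]
    by simp
  then have "p \<in> poly_in2 f1 f2"
    unfolding p_def by (intro poly_in2_sum poly_in2_mult poly_in2_const poly_in2_power) auto
  moreover have "cmod (K z - p z) < e" if "z \<in> D" for z
  proof -
    have "cmod ((K z)\<^sup>2) \<le> B\<^sup>2"
      unfolding norm_power using bound[OF that] by (simp add: power_mono)
    then show ?thesis
      using an[rule_format, of "(K z)\<^sup>2"] csqrt_power2_right_sector[OF sector[OF that]]
        Re_power2_right_sector_nonneg[OF sector[OF that]]
      by (simp add: p_def root[OF that])
  qed
  ultimately show "\<exists>p\<in>poly_in2 f1 f2. \<forall>z\<in>D. cmod (K z - p z) < e"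
    by blast
qed

lemma sum_powers_minus_odd_part:
  fixes z :: complex
  shows "(\<Sum>i<n. a i * z ^ i) - (\<Sum>i<n. a i * (- z) ^ i)
       = 2 * z * (\<Sum>i<n. (if odd i then a i else 0) * (z\<^sup>2) ^ (i div 2))"
proof -
  have "a i * z ^ i - a i * (- z) ^ i = 2 * z * ((if odd i then a i else 0) * (z\<^sup>2) ^ (i div 2))" for i
  proof (cases "odd i")
    case True
    then obtain k where k: "i = Suc (2 * k)"
      using oddE by fastforce
    then have "z ^ i = z * (z\<^sup>2) ^ k" "(- z) ^ i = - (z * (z\<^sup>2) ^ k)" "i div 2 = k"
      by (simp_all add: power_mult)
    with True show ?thesis
      by (simp add: algebra_simps)
  qed simp
  then have "(\<Sum>i<n. a i * z ^ i) - (\<Sum>i<n. a i * (- z) ^ i)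
      = (\<Sum>i<n. 2 * z * ((if odd i then a i else 0) * (z\<^sup>2) ^ (i div 2)))"
    by (simp only: sum_subtractf[symmetric])
  then show ?thesis
    by (simp add: sum_distrib_left)
qed

lemma odd_holomorphic_uniform_approx:
  assumes hol: "\<phi> holomorphic_on ball 0 R" and odd: "\<And>z. z \<in> ball 0 R \<Longrightarrow> \<phi> (- z) = - \<phi> z"
    and "0 \<le> r" "r < R" "e > 0"
  shows "\<exists>a n. \<forall>z\<in>cball 0 r. cmod (\<phi> z - z * (\<Sum>i<n. a i * (z\<^sup>2) ^ (i div 2))) < e"
proof -
  obtain a n where an: "\<forall>w\<in>cball 0 r. cmod (\<phi> w - (\<Sum>i<n. a i * w ^ i)) < e"
    using holomorphic_uniform_Taylor_approx[OF hol \<open>0 \<le> r\<close> \<open>r < R\<close> \<open>e > 0\<close>] by auto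
  define b where "b i = (if odd i then a i else 0)" for i
  have "cmod (\<phi> z - z * (\<Sum>i<n. b i * (z\<^sup>2) ^ (i div 2))) < e" if z: "z \<in> cball 0 r" for z
  proof -
    \<comment> \<open>as \<open>\<phi>\<close> is odd, this error is the mean of the Taylor errors at \<open>z\<close> and \<open>-z\<close>\<close>
    have "2 * (\<phi> z - z * (\<Sum>i<n. b i * (z\<^sup>2) ^ (i div 2)))
        = (\<phi> z - (\<Sum>i<n. a i * z ^ i)) - (\<phi> (- z) - (\<Sum>i<n. a i * (- z) ^ i))"
      using sum_powers_minus_odd_part[where n=n and a=a and z=z] odd[of z] z \<open>r < R\<close>
      by (simp add: b_def algebra_simps)
    also have "cmod \<dots> < 2 * e"
    proof -
      have "cmod (\<phi> z - (\<Sum>i<n. a i * z ^ i)) < e" "cmod (\<phi> (- z) - (\<Sum>i<n. a i * (- z) ^ i)) < e"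
        using an z by auto
      then show ?thesis
        using norm_triangle_ineq4[of "\<phi> z - (\<Sum>i<n. a i * z ^ i)" "\<phi> (- z) - (\<Sum>i<n. a i * (- z) ^ i)"]
        by linarith
    qed
    finally show ?thesis
      unfolding norm_mult by simp
  qed
  then show ?thesis
    by blast
qed

lemma norm_power2_add_diff_less:
  fixes a b c :: complex
  assumes "cmod a \<le> A" "cmod b \<le> B" "cmod (b - c) < \<delta>" "\<delta> \<le> 1"
  shows "cmod ((a + b)\<^sup>2 - (a + c)\<^sup>2) < \<delta> * (2 * A + 2 * B + 1)"
proof -
  have "cmod c \<le> B + 1"
    using norm_triangle_ineq4[of b "b - c"] assms(2-4) by simp
  then have "cmod (2 * a + b + c) \<le> 2 * A + 2 * B + 1"
    using norm_triangle_ineq[of "2 * a + b" c] norm_triangle_ineq[of "2 * a" b] assms(1,2)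
    by (simp add: norm_mult)
  have "(a + b)\<^sup>2 - (a + c)\<^sup>2 = (b - c) * (2 * a + b + c)"
    by (simp add: power2_eq_square algebra_simps)
  then have "cmod ((a + b)\<^sup>2 - (a + c)\<^sup>2) = cmod (b - c) * cmod (2 * a + b + c)"
    by (simp add: norm_mult)
  also have "\<dots> \<le> cmod (b - c) * (2 * A + 2 * B + 1)"
    using \<open>cmod (2 * a + b + c) \<le> 2 * A + 2 * B + 1\<close> by (simp add: mult_left_mono)
  also have "\<dots> < \<delta> * (2 * A + 2 * B + 1)"
    using assms norm_ge_zero[of a] norm_ge_zero[of b] by (intro mult_strict_right_mono) linarith+
  finally show ?thesis .
qed

lemma square_add_mult_poly_uniformly_approximable:
  fixes G E :: "complex \<Rightarrow> complex"
  assumes D: "continuous_on D G" "compact D"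
    and zG: "(\<lambda>z. z * G z) \<in> uniformly_approximable (\<lambda>z. z\<^sup>2) (\<lambda>z. (G z)\<^sup>2) D"
    and "E \<in> poly_in2 (\<lambda>z. z\<^sup>2) (\<lambda>z. (G z)\<^sup>2)"
  shows "(\<lambda>z. (G z + z * E z)\<^sup>2) \<in> uniformly_approximable (\<lambda>z. z\<^sup>2) (\<lambda>z. (G z)\<^sup>2) D"
    (is "_ \<in> ?A")
proof -
  have cont: "continuous_on D (\<lambda>z. z\<^sup>2)" "continuous_on D (\<lambda>z. (G z)\<^sup>2)" "compact D"
    using D by (auto intro!: continuous_intros)
  have E: "E \<in> ?A"
    using \<open>E \<in> poly_in2 _ _\<close> by (rule poly_in2_uniformly_approximable)
  have f1: "(\<lambda>z. z\<^sup>2) \<in> ?A" and f2: "(\<lambda>z. (G z)\<^sup>2) \<in> ?A"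
    by (intro poly_in2_uniformly_approximable poly_in2_first poly_in2_second)+
  have "(\<lambda>z. 2 * (z * G z) * E z) \<in> ?A"
    using uniformly_approximable_mult[OF uniformly_approximable_mult[OF uniformly_approximable_const zG cont]
        E cont] by simp
  moreover have "(\<lambda>z. z\<^sup>2 * (E z)\<^sup>2) \<in> ?A"
    using uniformly_approximable_mult[OF f1 uniformly_approximable_power[OF E cont] cont] by simp
  ultimately have "(\<lambda>z. (G z)\<^sup>2 + 2 * (z * G z) * E z + z\<^sup>2 * (E z)\<^sup>2) \<in> ?A"
    using f2 by (intro uniformly_approximable_add)
  moreover have "(G z)\<^sup>2 + 2 * (z * G z) * E z + z\<^sup>2 * (E z)\<^sup>2 = (G z + z * E z)\<^sup>2" for z
    by (simp add: power2_eq_square algebra_simps)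
  ultimately show ?thesis
    by simp
qed

lemma square_add_odd_uniformly_approximable:
  fixes G \<phi> :: "complex \<Rightarrow> complex"
  assumes "0 \<le> r" "r < R" and G: "continuous_on (cball 0 r) G"
    and hol: "\<phi> holomorphic_on ball 0 R" and odd: "\<And>z. z \<in> ball 0 R \<Longrightarrow> \<phi> (- z) = - \<phi> z"
    and sector: "\<And>z. z \<in> cball 0 r \<Longrightarrow> z * G z \<in> right_sector"
  shows "(\<lambda>z. (G z + \<phi> z)\<^sup>2) \<in> uniformly_approximable (\<lambda>z. z\<^sup>2) (\<lambda>z. (G z)\<^sup>2) (cball 0 r)"
    (is "_ \<in> ?A")
proof (rule uniformly_approximable_uniform_limit)
  let ?D = "cball (0 :: complex) r"
  have "continuous_on ?D \<phi>"
    by (rule continuous_on_subset[OF holomorphic_on_imp_continuous_on[OF hol]]) (use \<open>r < R\<close> in auto)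
  then obtain B\<phi> where "0 \<le> B\<phi>" and B\<phi>: "\<And>z. z \<in> ?D \<Longrightarrow> cmod (\<phi> z) \<le> B\<phi>"
    using continuous_on_compact_bound[OF compact_cball] by metis
  obtain BG where "0 \<le> BG" and BG: "\<And>z. z \<in> ?D \<Longrightarrow> cmod (G z) \<le> BG"
    using continuous_on_compact_bound[OF compact_cball G] by metis
  have "continuous_on ?D (\<lambda>z. z * G z)"
    using G by (intro continuous_intros)
  then obtain BK where "\<And>z. z \<in> ?D \<Longrightarrow> cmod (z * G z) \<le> BK"
    using continuous_on_compact_bound[OF compact_cball] by metis
  then have zG: "(\<lambda>z. z * G z) \<in> ?A"
    using sector by (intro right_sector_root_uniformly_approximable) (auto simp: power_mult_distrib)
  fix e :: real
  assume "e > 0"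
  define M where "M = 2 * BG + 2 * B\<phi> + 1"
  define \<delta> where "\<delta> = min 1 (e / M)"
  have "M > 0"
    using \<open>0 \<le> BG\<close> \<open>0 \<le> B\<phi>\<close> by (simp add: M_def)
  then have "\<delta> > 0" "\<delta> \<le> 1" "\<delta> * M \<le> e"
    using \<open>e > 0\<close> by (auto simp: \<delta>_def min_def field_simps)
  obtain a n where an: "\<forall>z\<in>?D. cmod (\<phi> z - z * (\<Sum>i<n. a i * (z\<^sup>2) ^ (i div 2))) < \<delta>"
    using odd_holomorphic_uniform_approx[where \<phi> = \<phi>, OF hol odd \<open>0 \<le> r\<close> \<open>r < R\<close> \<open>\<delta> > 0\<close>] by blast
  define E where "E z = (\<Sum>i<n. a i * (z\<^sup>2) ^ (i div 2))" for z
  have "E \<in> poly_in2 (\<lambda>z. z\<^sup>2) (\<lambda>z. (G z)\<^sup>2)"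
    unfolding E_def
    using poly_in2_sum_monomials[of "{..<n}" a "\<lambda>z. z\<^sup>2" "\<lambda>i. i div 2" "\<lambda>z. (G z)\<^sup>2" "\<lambda>_. 0"]
    by simp
  with G zG have "(\<lambda>z. (G z + z * E z)\<^sup>2) \<in> ?A"
    by (intro square_add_mult_poly_uniformly_approximable) auto
  moreover have "cmod ((G z + \<phi> z)\<^sup>2 - (G z + z * E z)\<^sup>2) < e" if "z \<in> ?D" for z
  proof -
    have "cmod (\<phi> z - z * E z) < \<delta>"
      using an that by (simp add: E_def)
    then have "cmod ((G z + \<phi> z)\<^sup>2 - (G z + z * E z)\<^sup>2) < \<delta> * M"
      unfolding M_def by (rule norm_power2_add_diff_less[OF BG[OF that] B\<phi>[OF that] _ \<open>\<delta> \<le> 1\<close>])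
    then show ?thesis
      using \<open>\<delta> * M \<le> e\<close> by linarith
  qed
  ultimately show "\<exists>k\<in>?A. \<forall>z\<in>?D. cmod ((G z + \<phi> z)\<^sup>2 - k z) < e"
    by (intro bexI[of _ "\<lambda>z. (G z + z * E z)\<^sup>2"]) auto
qed

lemma unif_closure_alg_square_add_odd_eq:
  fixes G \<phi> :: "complex \<Rightarrow> complex"
  assumes r: "0 \<le> r" "r < R" and G: "continuous_on (cball 0 r) G"
    and hol: "\<phi> holomorphic_on ball 0 R" and odd: "\<And>z. z \<in> ball 0 R \<Longrightarrow> \<phi> (- z) = - \<phi> z"
    and sector_G: "\<And>z. z \<in> cball 0 r \<Longrightarrow> z * G z \<in> right_sector"
    and sector_G\<phi>: "\<And>z. z \<in> cball 0 r \<Longrightarrow> z * (G z + \<phi> z) \<in> right_sector"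
  shows "unif_closure_alg (\<lambda>z. z\<^sup>2) (\<lambda>z. (G z + \<phi> z)\<^sup>2) (cball 0 r)
       = unif_closure_alg (\<lambda>z. z\<^sup>2) (\<lambda>z. (G z)\<^sup>2) (cball 0 r)"
proof -
  have "continuous_on (cball 0 r) \<phi>"
    by (rule continuous_on_subset[OF holomorphic_on_imp_continuous_on[OF hol]]) (use \<open>r < R\<close> in auto)
  then have G\<phi>: "continuous_on (cball 0 r) (\<lambda>z. G z + \<phi> z)"
    using G by (intro continuous_intros)
  have "(\<lambda>z. (G z + \<phi> z)\<^sup>2) \<in> uniformly_approximable (\<lambda>z. z\<^sup>2) (\<lambda>z. (G z)\<^sup>2) (cball 0 r)"
    using r G hol odd sector_G by (rule square_add_odd_uniformly_approximable)
  moreover have "(\<lambda>z. ((G z + \<phi> z) + - \<phi> z)\<^sup>2)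
      \<in> uniformly_approximable (\<lambda>z. z\<^sup>2) (\<lambda>z. (G z + \<phi> z)\<^sup>2) (cball 0 r)"
    using r G\<phi> _ _ sector_G\<phi>
    by (rule square_add_odd_uniformly_approximable) (use hol odd in \<open>auto intro!: holomorphic_intros\<close>)
  ultimately have "uniformly_approximable (\<lambda>z. z\<^sup>2) (\<lambda>z. (G z + \<phi> z)\<^sup>2) (cball 0 r)
      = uniformly_approximable (\<lambda>z. z\<^sup>2) (\<lambda>z. (G z)\<^sup>2) (cball 0 r)"
    using G G\<phi> by (intro equalityI uniformly_approximable_subset) (auto intro!: continuous_intros)
  then show ?thesis
    unfolding unif_closure_alg_eq by simp
qed

section \<open>Local behaviour of the data\<close>

lemma wirtinger_eq_cnj:
  assumes "bounded_linear L" "wirt_z L = 0" "wirt_zbar L = 1"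
  shows "L = cnj"
proof
  fix z
  have "L 1 = 1" and i: "\<i> * L \<i> = 1"
    using assms(2,3) by (auto simp: wirt_z_def wirt_zbar_def field_simps)
  have "L \<i> = - \<i> * (\<i> * L \<i>)"
    by simp
  then have "L \<i> = - \<i>"
    by (simp add: i)
  have "z = Re z *\<^sub>R 1 + Im z *\<^sub>R \<i>"
    by (simp add: complex_eq_iff)
  then have "L z = Re z *\<^sub>R L 1 + Im z *\<^sub>R L \<i>"
    by (metis assms(1) bounded_linear.linear linear_add linear_scale)
  also have "\<dots> = cnj z"
    by (simp add: \<open>L 1 = 1\<close> \<open>L \<i> = - \<i>\<close> complex_eq_iff)
  finally show "L z = cnj z" .
qed

lemma mult_mem_right_sector_if_near_cnj:
  assumes "cmod (w - cnj z) \<le> cmod z / 4"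
  shows "z * w \<in> right_sector"
proof -
  define E where "E = z * (w - cnj z)"
  have "z * w = of_real ((cmod z)\<^sup>2) + E"
    by (simp add: E_def complex_norm_square[symmetric] algebra_simps)
  moreover have "cmod E \<le> (cmod z)\<^sup>2 / 4"
    using mult_left_mono[OF assms norm_ge_zero[of z]] by (simp add: E_def norm_mult power2_eq_square)
  ultimately show ?thesis
    using abs_Re_le_cmod[of E] abs_Im_le_cmod[of E] zero_le_power2[of "cmod z"]
    unfolding right_sector_def by auto
qed

lemma has_derivative_eventually_norm_le:
  assumes "(g has_derivative L) (at x)" "c > 0"
  shows "\<forall>\<^sub>F y in nhds x. norm (g y - g x - L (y - x)) \<le> c * norm (y - x)"
proof -
  have "\<forall>\<^sub>F y in at x. norm (g y - g x - L (y - x)) \<le> c * norm (y - x)"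
    using assms has_derivative_within_alt2[of g L x UNIV] by blast
  moreover have "L 0 = 0"
    using assms(1) by (simp add: has_derivative_bounded_linear linear_simps(3))
  ultimately show ?thesis
    by (simp add: eventually_nhds_conv_at)
qed

lemma eventually_norm_le_of_cubic_bound:
  fixes f :: "complex \<Rightarrow> complex"
  assumes "\<forall>z\<in>ball 0 \<rho>. cmod (f z) \<le> C * cmod z ^ 3" "\<rho> > 0" "c > 0"
  shows "\<forall>\<^sub>F z in nhds 0. cmod (f z) \<le> c * cmod z"
proof -
  have "((\<lambda>z. \<bar>C\<bar> * (cmod z)\<^sup>2) \<longlongrightarrow> 0) (nhds (0 :: complex))"
    by (auto intro!: tendsto_eq_intros simp: filterlim_ident)
  then have "\<forall>\<^sub>F z in nhds 0. \<bar>C\<bar> * (cmod z)\<^sup>2 < c"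
    using \<open>c > 0\<close> by (rule order_tendstoD)
  moreover have "\<forall>\<^sub>F z in nhds 0. z \<in> ball 0 \<rho>"
    using \<open>\<rho> > 0\<close> by (intro eventually_nhds_in_open) auto
  ultimately show ?thesis
  proof eventually_elim
    case (elim z)
    then have "cmod (f z) \<le> C * cmod z ^ 3"
      using assms(1) by blast
    also have "\<dots> \<le> (\<bar>C\<bar> * (cmod z)\<^sup>2) * cmod z"
      by (simp add: mult_right_mono power3_eq_cube power2_eq_square mult.assoc)
    also have "\<dots> \<le> c * cmod z"
      using elim by (intro mult_right_mono) auto
    finally show ?case .
  qed
qed

theorem mainTheorem9:
  fixes g f :: "complex \<Rightarrow> complex"
    and Dg :: "complex \<Rightarrow> complex \<Rightarrow> complex"
    and U :: "complex set"
  assumes U: "open U" "0 \<in> U"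
    and g_deriv: "\<forall>z\<in>U. (g has_derivative Dg z) (at z)"
    and g_C1: "continuous_on U (\<lambda>z. Dg z 1)" "continuous_on U (\<lambda>z. Dg z \<i>)"
    and g0: "g 0 = 0"
    and gz: "wirt_z (Dg 0) = 0"
    and gzbar: "wirt_zbar (Dg 0) = 1"
    and sep: "\<exists>\<epsilon>>0. \<forall>z\<in>ball 0 \<epsilon>. \<forall>w\<in>ball 0 \<epsilon>.
               z ^ 2 = w ^ 2 \<and> (g z) ^ 2 = (g w) ^ 2 \<longrightarrow> z = w"
    and f_hol: "\<exists>\<rho>>0. f holomorphic_on ball 0 \<rho> \<and> (\<forall>z\<in>ball 0 \<rho>. f (- z) = - f z)"
    and f_O: "\<exists>C \<rho>. \<rho> > 0 \<and> (\<forall>z\<in>ball 0 \<rho>. cmod (f z) \<le> C * cmod z ^ 3)"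
  shows "\<exists>r0>0. \<forall>r. 0 < r \<and> r < r0 \<longrightarrow>
           unif_closure_alg (\<lambda>z. z ^ 2) (\<lambda>z. (g z + f z) ^ 2) (cball 0 r)
         = unif_closure_alg (\<lambda>z. z ^ 2) (\<lambda>z. (g z) ^ 2) (cball 0 r)"
proof -
  have "(g has_derivative Dg 0) (at 0)"
    using g_deriv U(2) by blast
  moreover have "Dg 0 = cnj"
    by (rule wirtinger_eq_cnj[OF has_derivative_bounded_linear[OF calculation] gz gzbar])
  ultimately have "\<forall>\<^sub>F z in nhds 0. cmod (g z - cnj z) \<le> cmod z / 8"
    using has_derivative_eventually_norm_le[of g cnj 0 "1 / 8"] by (simp add: g0)
  moreover obtain C \<rho> where "\<rho> > 0" "\<forall>z\<in>ball 0 \<rho>. cmod (f z) \<le> C * cmod z ^ 3"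
    using f_O by blast
  then have "\<forall>\<^sub>F z in nhds 0. cmod (f z) \<le> cmod z / 8"
    using eventually_norm_le_of_cubic_bound[of \<rho> f C "1 / 8"] by simp
  moreover have "\<forall>\<^sub>F z in nhds 0. z \<in> U"
    using U by (rule eventually_nhds_in_open)
  ultimately have "\<forall>\<^sub>F z in nhds 0.
      cmod (g z - cnj z) \<le> cmod z / 8 \<and> cmod (f z) \<le> cmod z / 8 \<and> z \<in> U"
    by eventually_elim blast
  then obtain r1 where "r1 > 0" and near: "\<And>z. cmod z < r1 \<Longrightarrow>
      cmod (g z - cnj z) \<le> cmod z / 8 \<and> cmod (f z) \<le> cmod z / 8 \<and> z \<in> U"
    unfolding eventually_nhds_metric dist_norm by auto
  obtain R where "R > 0" "f holomorphic_on ball 0 R" "\<And>z. z \<in> ball 0 R \<Longrightarrow> f (- z) = - f z"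
    using f_hol by blast
  show ?thesis
  proof (intro exI[of _ "min r1 R"] conjI allI impI)
    show "0 < min r1 R"
      using \<open>r1 > 0\<close> \<open>R > 0\<close> by simp
  next
    fix r
    assume r: "0 < r \<and> r < min r1 R"
    then have near_D: "cmod (g z - cnj z) \<le> cmod z / 8" "cmod (f z) \<le> cmod z / 8" "z \<in> U"
      if "z \<in> cball 0 r" for z
      using near[of z] that by auto
    have "continuous_on (cball 0 r) g"
      using g_deriv near_D(3)
      by (intro continuous_at_imp_continuous_on ballI has_derivative_continuous) blast
    moreover have "cmod (g z - cnj z) \<le> cmod z / 4" "cmod (g z + f z - cnj z) \<le> cmod z / 4"
      if "z \<in> cball 0 r" for z
      using norm_triangle_ineq[of "g z - cnj z" "f z"] near_D[OF that] norm_ge_zero[of "g z - cnj z"]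
      by (simp_all add: algebra_simps, linarith)
    ultimately show "unif_closure_alg (\<lambda>z. z ^ 2) (\<lambda>z. (g z + f z) ^ 2) (cball 0 r)
        = unif_closure_alg (\<lambda>z. z ^ 2) (\<lambda>z. (g z) ^ 2) (cball 0 r)"
      using r \<open>f holomorphic_on ball 0 R\<close> \<open>\<And>z. z \<in> ball 0 R \<Longrightarrow> f (- z) = - f z\<close>
      by (intro unif_closure_alg_square_add_odd_eq[of r R] mult_mem_right_sector_if_near_cnj) auto
  qed
qed

end
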